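(* Let $a$ and $w$ be non-negative integers and let $f:\mathbb{N}\to\mathbb{N}$ be an arbitrary non-decreasing function. There exist integers $w_0$ and $n_0$ such that the following holds. If a graph $G$ has a proper path decomposition of interior width at most $w$, adhesion at most $a$, and order at least $n_0$, then for some $w'\le w_0$ and $p\le a$, $G$ also has a $p$-linked proper path decomposition of interior width at most $w'$ and order at least $f(w')$.
   Context: A path decomposition of a graph $G$ is a pair $(P,\beta)$ where $P$ is a path and $\beta$ assigns to each node of $P$ a subset (bag) of $V(G)$ such that every edge of $G$ has both ends in some bag and for every vertex $v$ the nodes whose bags contain $v$ form a non-empty subpath of $P$. Let $s,t$ be the first and last nodes of $P$. For a node $x\neq s$ let $l(x)$ be the preceding node and $L(x)=\beta(l(x))\cap\beta(x)$; for $x\neq t$ let $r(x)$ be the following node and $R(x)=\beta(r(x))\cap\beta(x)$. The decomposition is proper if $\beta(x)\not\subseteq\beta(y)$ for all distinct nodes $x,y$. Its interior width is the maximum of $|\beta(x)|-1$ over nodes $x\notin\{s,t\}$. Its adhesion is the maximum of $|\beta(x)\cap\beta(y)|$ over adjacent nodes $x,y$ of $P$. It is $p$-linked if $|L(x)|=p$ for all $x\neq s$ and $G$ contains $p$ pairwise vertex-disjoint paths from $R(s)$ to $L(t)$. Its order is $|V(P)|$. *)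

theory Defs
  imports Main
begin

text \<open>A finite (simple) graph with vertex set V and symmetric irreflexive
  edge relation E on V. Vertices are natural numbers (every finite graph is
  isomorphic to one of this form).\<close>
definition graph :: "nat set \<Rightarrow> (nat \<Rightarrow> nat \<Rightarrow> bool) \<Rightarrow> bool" where
  "graph V E \<longleftrightarrow> finite V \<and> (\<forall>u v. E u v \<longrightarrow> u \<in> V \<and> v \<in> V)
     \<and> (\<forall>u v. E u v \<longrightarrow> E v u) \<and> (\<forall>v. \<not> E v v)"

text \<open>A path decomposition is given by the list of bags along the path P:
  node i of P (for i < length B) carries the bag B ! i; consecutive indices
  are adjacent nodes; the first node s is 0 and the last node t is length B - 1.\<close>
definition path_decomp :: "nat set \<Rightarrow> (nat \<Rightarrow> nat \<Rightarrow> bool) \<Rightarrow> nat set list \<Rightarrow> bool" where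
  "path_decomp V E B \<longleftrightarrow> B \<noteq> [] \<and> (\<forall>i < length B. B ! i \<subseteq> V)
     \<and> (\<forall>u v. E u v \<longrightarrow> (\<exists>i < length B. u \<in> B ! i \<and> v \<in> B ! i))
     \<and> (\<forall>v \<in> V. (\<exists>i < length B. v \<in> B ! i)
          \<and> (\<forall>i j k. i \<le> j \<and> j \<le> k \<and> k < length B \<and> v \<in> B ! i \<and> v \<in> B ! k \<longrightarrow> v \<in> B ! j))"

definition proper_pd :: "nat set list \<Rightarrow> bool" where
  "proper_pd B \<longleftrightarrow> (\<forall>i < length B. \<forall>j < length B. i \<noteq> j \<longrightarrow> \<not> (B ! i \<subseteq> B ! j))"

definition interior_width_le :: "nat set list \<Rightarrow> nat \<Rightarrow> bool" where
  "interior_width_le B w \<longleftrightarrow> (\<forall>i. 0 < i \<and> i + 1 < length B \<longrightarrow> card (B ! i) \<le> w + 1)"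

definition adhesion_le :: "nat set list \<Rightarrow> nat \<Rightarrow> bool" where
  "adhesion_le B a \<longleftrightarrow> (\<forall>i. i + 1 < length B \<longrightarrow> card (B ! i \<inter> B ! (i + 1)) \<le> a)"

text \<open>L(x) for node x>0 and R(x) for node x < last.\<close>
definition Lset :: "nat set list \<Rightarrow> nat \<Rightarrow> nat set" where
  "Lset B i = B ! (i - 1) \<inter> B ! i"

definition Rset :: "nat set list \<Rightarrow> nat \<Rightarrow> nat set" where
  "Rset B i = B ! (i + 1) \<inter> B ! i"

definition gpath :: "nat set \<Rightarrow> (nat \<Rightarrow> nat \<Rightarrow> bool) \<Rightarrow> nat list \<Rightarrow> bool" where
  "gpath V E ps \<longleftrightarrow> ps \<noteq> [] \<and> distinct ps \<and> set ps \<subseteq> V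
     \<and> (\<forall>i. i + 1 < length ps \<longrightarrow> E (ps ! i) (ps ! (i + 1)))"

definition disjoint_paths :: "nat set \<Rightarrow> (nat \<Rightarrow> nat \<Rightarrow> bool) \<Rightarrow> nat \<Rightarrow> nat set \<Rightarrow> nat set \<Rightarrow> bool" where
  "disjoint_paths V E p X Y \<longleftrightarrow> (\<exists>Ps :: nat list list. length Ps = p
     \<and> (\<forall>k < p. gpath V E (Ps ! k) \<and> hd (Ps ! k) \<in> X \<and> last (Ps ! k) \<in> Y)
     \<and> (\<forall>k < p. \<forall>l < p. k \<noteq> l \<longrightarrow> set (Ps ! k) \<inter> set (Ps ! l) = {}))"

text \<open>p-linked: |L(x)| = p for all x \<noteq> s, and p disjoint paths from R(s) to L(t).
  Requires at least two nodes so that R(s) and L(t) are defined.\<close>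
definition p_linked :: "nat set \<Rightarrow> (nat \<Rightarrow> nat \<Rightarrow> bool) \<Rightarrow> nat set list \<Rightarrow> nat \<Rightarrow> bool" where
  "p_linked V E B p \<longleftrightarrow> 2 \<le> length B
     \<and> (\<forall>i. 0 < i \<and> i < length B \<longrightarrow> card (Lset B i) = p)
     \<and> disjoint_paths V E p (Rset B 0) (Lset B (length B - 1))"

end

theory Submission
  imports Defs
begin

text \<open>A proper path decomposition is the same thing as a strictly increasing chain of
  separations, so new decompositions are obtained by choosing separations nested between old ones.
  Cut a long decomposition of adhesion at most \<open>a\<close> into many windows. If some window admits no
  separation of order less than \<open>a\<close> between its two ends, Menger's theorem gives \<open>a\<close> disjoint
  paths through it, and restricting the decomposition to the window yields an \<open>a\<close>-linked
  decomposition of the same width. Otherwise one separation of order less than \<open>a\<close> from each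
  window gives a long decomposition of adhesion at most \<open>a - 1\<close> and bounded width, and induction
  on \<open>a\<close> finishes the proof.\<close>

section \<open>Separations and path decompositions\<close>

definition separation :: "nat set \<Rightarrow> (nat \<Rightarrow> nat \<Rightarrow> bool) \<Rightarrow> nat set \<Rightarrow> nat set \<Rightarrow> bool" where
  "separation V E A B \<longleftrightarrow> A \<union> B = V \<and> (\<forall>u v. E u v \<longrightarrow> u \<in> A \<longrightarrow> u \<notin> B \<longrightarrow> v \<in> A)"

lemma separation_swap:
  assumes g: "graph V E" and s: "separation V E A B"
  shows "separation V E B A"
  unfolding separation_def
proof (intro conjI allI impI)
  show "B \<union> A = V" using s unfolding separation_def by blast
next
  fix u v assume uv: "E u v" "u \<in> B" "u \<notin> A"
  show "v \<in> B"
  proof (rule ccontr)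
    assume "v \<notin> B"
    moreover have "v \<in> V" "E v u" using g uv(1) unfolding graph_def by blast+
    ultimately have "u \<in> A" using s unfolding separation_def by blast
    then show False using uv(3) by blast
  qed
qed

text \<open>A path decomposition with bags \<open>B\<^sub>0, \<dots>, B\<^sub>m\<close> is the same thing as a nested sequence
  of separations \<open>(L\<^sub>k, R\<^sub>k)\<close>, \<open>k \<le> m + 1\<close>, from \<open>({}, V)\<close> to \<open>(V, {})\<close>: the bag \<open>B\<^sub>k\<close> is
  \<open>L\<^sub>k\<^sub>+\<^sub>1 \<inter> R\<^sub>k\<close> and the adhesion set \<open>B\<^sub>k\<^sub>-\<^sub>1 \<inter> B\<^sub>k\<close> is \<open>L\<^sub>k \<inter> R\<^sub>k\<close>.\<close>

definition sep_chain ::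
    "nat set \<Rightarrow> (nat \<Rightarrow> nat \<Rightarrow> bool) \<Rightarrow> nat \<Rightarrow> (nat \<Rightarrow> nat set) \<Rightarrow> (nat \<Rightarrow> nat set) \<Rightarrow> bool" where
  "sep_chain V E m L R \<longleftrightarrow> L 0 = {} \<and> R 0 = V \<and> L (Suc m) = V \<and> R (Suc m) = {}
     \<and> (\<forall>k\<le>Suc m. separation V E (L k) (R k)) \<and> (\<forall>k\<le>m. L k \<subseteq> L (Suc k) \<and> R (Suc k) \<subseteq> R k)"

definition strict_chain :: "nat \<Rightarrow> (nat \<Rightarrow> nat set) \<Rightarrow> (nat \<Rightarrow> nat set) \<Rightarrow> bool" where
  "strict_chain m L R \<longleftrightarrow> (\<forall>k\<le>m. (\<exists>x. x \<in> L (Suc k) \<and> x \<in> R k \<and> x \<notin> L k)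
       \<and> (\<exists>y. y \<in> L (Suc k) \<and> y \<in> R k \<and> y \<notin> R (Suc k)))"

definition chain_bags :: "nat \<Rightarrow> (nat \<Rightarrow> nat set) \<Rightarrow> (nat \<Rightarrow> nat set) \<Rightarrow> nat set list" where
  "chain_bags m L R = map (\<lambda>k. L (Suc k) \<inter> R k) [0..<Suc m]"

lemma length_chain_bags [simp]: "length (chain_bags m L R) = Suc m"
  unfolding chain_bags_def by simp

lemma nth_chain_bags [simp]: "k < Suc m \<Longrightarrow> chain_bags m L R ! k = L (Suc k) \<inter> R k"
  unfolding chain_bags_def by (simp del: upt_Suc)

lemma sep_chainD:
  assumes "sep_chain V E m L R" "k \<le> Suc m"
  shows "separation V E (L k) (R k)" "L k \<union> R k = V" "L k \<subseteq> V" "R k \<subseteq> V"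
  using assms unfolding sep_chain_def separation_def by blast+

lemma sep_chain_mono:
  assumes c: "sep_chain V E m L R" and "i \<le> j" "j \<le> Suc m"
  shows "L i \<subseteq> L j" "R j \<subseteq> R i"
proof -
  have "L i \<subseteq> L j \<and> R j \<subseteq> R i" using assms(2,3)
  proof (induction j rule: dec_induct)
    case (step n)
    then have "L n \<subseteq> L (Suc n) \<and> R (Suc n) \<subseteq> R n" using c unfolding sep_chain_def by simp
    with step show ?case by auto
  qed simp
  then show "L i \<subseteq> L j" "R j \<subseteq> R i" by auto
qed

lemma sep_chain_enters_bag:
  assumes c: "sep_chain V E m L R" and "v \<in> L j" "j \<le> Suc m"
  shows "\<exists>k<j. v \<in> L (Suc k) \<inter> R k"
  using assms(2,3)
proof (induction j)
  case 0 then show ?case using c unfolding sep_chain_def by simp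
next
  case (Suc j)
  show ?case
  proof (cases "v \<in> L j")
    case True then show ?thesis using Suc by (metis Suc_leD less_SucI)
  next
    case False
    then have "v \<in> R j" using Suc.prems sep_chainD[OF c, of "Suc j"] sep_chainD(2)[OF c, of j] by auto
    then show ?thesis using Suc.prems by blast
  qed
qed

lemma sep_chain_edge_in_bag:
  assumes g: "graph V E" and c: "sep_chain V E m L R" and e: "E u v"
  shows "\<exists>k\<le>m. {u, v} \<subseteq> L (Suc k) \<inter> R k"
proof -
  have "\<exists>k<j. {u, v} \<subseteq> L (Suc k) \<inter> R k" if "{u, v} \<subseteq> L j" "j \<le> Suc m" for j
    using that
  proof (induction j)
    case 0 then show ?case using c unfolding sep_chain_def by simp
  next
    case (Suc j)
    show ?case
    proof (cases "{u, v} \<subseteq> L j")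
      case True then show ?thesis using Suc by (metis Suc_leD less_SucI)
    next
      case False
      have s: "separation V E (R j) (L j)" using separation_swap[OF g sep_chainD(1)[OF c]] Suc by simp
      have uvV: "u \<in> V" "v \<in> V" "E v u" using g e unfolding graph_def by blast+
      have "{u, v} \<subseteq> R j"
      proof (cases "u \<in> L j")
        case True
        then have "v \<in> R j - L j" using False uvV sep_chainD(2)[OF c, of j] Suc.prems by auto
        then show ?thesis using s uvV(3) unfolding separation_def by blast
      next
        case False
        then have "u \<in> R j - L j" using uvV sep_chainD(2)[OF c, of j] Suc.prems by auto
        then show ?thesis using s e unfolding separation_def by blast
      qed
      then show ?thesis using Suc.prems by blast
    qed
  qed
  moreover have "u \<in> V" "v \<in> V" using g e unfolding graph_def by blast+
  ultimately show ?thesis using c unfolding sep_chain_def by (metis empty_subsetI insert_subset le_refl less_Suc_eq_le)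
qed

lemma path_decomp_chain_bags:
  assumes g: "graph V E" and c: "sep_chain V E m L R"
  shows "path_decomp V E (chain_bags m L R)"
  unfolding path_decomp_def
proof (intro conjI allI impI ballI)
  show "chain_bags m L R \<noteq> []" by (simp add: chain_bags_def)
next
  fix i assume "i < length (chain_bags m L R)"
  then show "chain_bags m L R ! i \<subseteq> V" using sep_chainD(3)[OF c, of "Suc i"] by auto
next
  fix u v assume "E u v"
  then obtain k where "k \<le> m" "{u, v} \<subseteq> L (Suc k) \<inter> R k" using sep_chain_edge_in_bag[OF g c] by blast
  then show "\<exists>i<length (chain_bags m L R). u \<in> chain_bags m L R ! i \<and> v \<in> chain_bags m L R ! i"
    by (intro exI[of _ k]) auto
next
  fix v assume "v \<in> V"
  then have "v \<in> L (Suc m)" using c unfolding sep_chain_def by simp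
  then obtain k where "k < Suc m" "v \<in> L (Suc k) \<inter> R k" using sep_chain_enters_bag[OF c] by blast
  then show "\<exists>i<length (chain_bags m L R). v \<in> chain_bags m L R ! i" by (intro exI[of _ k]) auto
next
  fix v i j k assume h: "i \<le> j \<and> j \<le> k \<and> k < length (chain_bags m L R)
      \<and> v \<in> chain_bags m L R ! i \<and> v \<in> chain_bags m L R ! k"
  then have "v \<in> L (Suc i)" "v \<in> R k" by auto
  moreover have "L (Suc i) \<subseteq> L (Suc j)" "R k \<subseteq> R j" using sep_chain_mono[OF c] h by auto
  ultimately show "v \<in> chain_bags m L R ! j" using h by auto
qed

lemma proper_pd_chain_bags:
  assumes c: "sep_chain V E m L R" and p: "strict_chain m L R"
  shows "proper_pd (chain_bags m L R)"
  unfolding proper_pd_def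
proof (intro allI impI)
  fix i j assume h: "i < length (chain_bags m L R)" "j < length (chain_bags m L R)" "i \<noteq> j"
  then have i: "i \<le> m" by simp
  show "\<not> chain_bags m L R ! i \<subseteq> chain_bags m L R ! j"
  proof (cases "i < j")
    case True
    obtain y where "y \<in> L (Suc i)" "y \<in> R i" "y \<notin> R (Suc i)" using p i unfolding strict_chain_def by blast
    moreover have "R j \<subseteq> R (Suc i)" using sep_chain_mono[OF c, of "Suc i" j] h True by auto
    ultimately show ?thesis using h by auto
  next
    case False
    obtain x where "x \<in> L (Suc i)" "x \<in> R i" "x \<notin> L i" using p i unfolding strict_chain_def by blast
    moreover have "L (Suc j) \<subseteq> L i" using sep_chain_mono[OF c, of "Suc j" i] h False by auto
    ultimately show ?thesis using h by auto
  qed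
qed

lemma Lset_chain_bags:
  assumes c: "sep_chain V E m L R" and k: "0 < k" "k \<le> m"
  shows "Lset (chain_bags m L R) k = L k \<inter> R k"
proof -
  have "L k \<subseteq> L (Suc k)" "R k \<subseteq> R (k - 1)"
    using sep_chain_mono[OF c, of k "Suc k"] sep_chain_mono[OF c, of "k - 1" k] k by auto
  then show ?thesis using k unfolding Lset_def by auto
qed

lemma Rset_chain_bags_0:
  assumes c: "sep_chain V E m L R" and m: "0 < m"
  shows "Rset (chain_bags m L R) 0 = L 1 \<inter> R 1"
proof -
  have "L 1 \<subseteq> L 2" "R 1 \<subseteq> R 0"
    using sep_chain_mono[OF c, of 1 2] sep_chain_mono[OF c, of 0 1] m by auto
  then show ?thesis using m unfolding Rset_def by (auto simp: numeral_2_eq_2)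
qed

lemma card_sep_chain_window_le:
  assumes g: "graph V E" and c: "sep_chain V E m L R" and ij: "i < j" "j \<le> Suc m"
    and bags: "\<And>k. i \<le> k \<Longrightarrow> k < j \<Longrightarrow> card (L (Suc k) \<inter> R k) \<le> w"
  shows "card (L j \<inter> R i) \<le> (j - i) * w"
proof -
  have cover: "L j \<inter> R i \<subseteq> (\<Union>k\<in>{i..<j}. L (Suc k) \<inter> R k)"
  proof
    fix v assume v: "v \<in> L j \<inter> R i"
    then obtain k where k: "k < j" "v \<in> L (Suc k) \<inter> R k" using sep_chain_enters_bag[OF c _ ij(2)] by blast
    show "v \<in> (\<Union>k\<in>{i..<j}. L (Suc k) \<inter> R k)"
    proof (cases "i \<le> k")
      case False
      then have "v \<in> L (Suc i)" using k sep_chain_mono(1)[OF c, of "Suc k" "Suc i"] ij by auto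
      then show ?thesis using v ij by auto
    qed (use k in auto)
  qed
  have "finite V" using g unfolding graph_def by simp
  then have "card (L j \<inter> R i) \<le> card (\<Union>k\<in>{i..<j}. L (Suc k) \<inter> R k)"
    using sep_chainD(3)[OF c] ij by (intro card_mono[OF _ cover]) (meson atLeastLessThan_iff finite_Int finite_UN_I finite_atLeastLessThan finite_subset le_trans Suc_leI)
  also have "\<dots> \<le> (\<Sum>k\<in>{i..<j}. card (L (Suc k) \<inter> R k))" by (rule card_UN_le) simp
  also have "\<dots> \<le> (\<Sum>k\<in>{i..<j}. w)" by (rule sum_mono) (use bags in auto)
  finally show ?thesis by simp
qed

definition pd_left :: "nat set list \<Rightarrow> nat \<Rightarrow> nat set" where
  "pd_left B k = (\<Union>i\<in>{i. i < k \<and> i < length B}. B ! i)"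

definition pd_right :: "nat set list \<Rightarrow> nat \<Rightarrow> nat set" where
  "pd_right B k = (\<Union>i\<in>{i. k \<le> i \<and> i < length B}. B ! i)"

lemma path_decomp_convex:
  assumes "path_decomp V E B" "v \<in> B ! i" "v \<in> B ! k" "i \<le> j" "j \<le> k" "k < length B"
  shows "v \<in> B ! j"
proof -
  have "B ! i \<subseteq> V" using assms unfolding path_decomp_def by simp
  then have "v \<in> V" using assms(2) by blast
  then show ?thesis using assms unfolding path_decomp_def by blast
qed

lemma sep_chain_pd_parts:
  assumes pd: "path_decomp V E B"
  shows "sep_chain V E (length B - 1) (pd_left B) (pd_right B)"
proof -
  have U: "(\<Union>i\<in>{i. i < length B}. B ! i) = V" using pd unfolding path_decomp_def by blast
  have len: "Suc (length B - 1) = length B" using pd unfolding path_decomp_def by (cases B) auto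
  have sep: "separation V E (pd_left B k) (pd_right B k)" for k
    unfolding separation_def
  proof (intro conjI allI impI)
    have "{i. i < length B} = {i. i < k \<and> i < length B} \<union> {i. k \<le> i \<and> i < length B}" by auto
    then show "pd_left B k \<union> pd_right B k = V" unfolding pd_left_def pd_right_def U[symmetric] by (simp add: UN_Un)
  next
    fix u v assume e: "E u v" and u: "u \<in> pd_left B k" "u \<notin> pd_right B k"
    obtain i where i: "i < length B" "u \<in> B ! i" "v \<in> B ! i" using pd e unfolding path_decomp_def by blast
    have "i < k"
    proof (rule ccontr)
      assume "\<not> i < k"
      then have "u \<in> pd_right B k" unfolding pd_right_def using i by (intro UN_I[of i]) auto
      then show False using u by blast
    qed
    then show "v \<in> pd_left B k" using i unfolding pd_left_def by auto
  qed
  show ?thesis unfolding sep_chain_def len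
  proof (intro conjI allI impI sep)
    show "pd_left B 0 = {}" "pd_right B (length B) = {}" unfolding pd_left_def pd_right_def by auto
    show "pd_right B 0 = V" "pd_left B (length B) = V" unfolding pd_left_def pd_right_def U[symmetric] by simp_all
  next
    fix k show "pd_left B k \<subseteq> pd_left B (Suc k)" unfolding pd_left_def by (intro UN_mono) auto
  next
    fix k show "pd_right B (Suc k) \<subseteq> pd_right B k" unfolding pd_right_def by (intro UN_mono) auto
  qed
qed

lemma bag_eq_pd_parts:
  assumes pd: "path_decomp V E B" and k: "k < length B"
  shows "pd_left B (Suc k) \<inter> pd_right B k = B ! k"
proof
  show "B ! k \<subseteq> pd_left B (Suc k) \<inter> pd_right B k" using k unfolding pd_left_def pd_right_def by auto
  show "pd_left B (Suc k) \<inter> pd_right B k \<subseteq> B ! k"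
  proof
    fix v assume "v \<in> pd_left B (Suc k) \<inter> pd_right B k"
    then obtain i j where "i \<le> k" "v \<in> B ! i" "k \<le> j" "j < length B" "v \<in> B ! j"
      unfolding pd_left_def pd_right_def by (auto simp: less_Suc_eq_le)
    then show "v \<in> B ! k" using path_decomp_convex[OF pd, of v i j k] by blast
  qed
qed

lemma adhesion_eq_pd_parts:
  assumes pd: "path_decomp V E B" and k: "0 < k" "k < length B"
  shows "pd_left B k \<inter> pd_right B k = B ! (k - 1) \<inter> B ! k"
proof
  have "k - 1 \<in> {i. i < k \<and> i < length B}" "k \<in> {i. k \<le> i \<and> i < length B}" using k by auto
  then show "B ! (k - 1) \<inter> B ! k \<subseteq> pd_left B k \<inter> pd_right B k"
    unfolding pd_left_def pd_right_def by blast
  show "pd_left B k \<inter> pd_right B k \<subseteq> B ! (k - 1) \<inter> B ! k"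
  proof
    fix v assume "v \<in> pd_left B k \<inter> pd_right B k"
    then obtain i j where "i < k" "v \<in> B ! i" "k \<le> j" "j < length B" "v \<in> B ! j"
      unfolding pd_left_def pd_right_def by auto
    then show "v \<in> B ! (k - 1) \<inter> B ! k" using path_decomp_convex[OF pd, of v i j] by auto
  qed
qed

lemma strict_chain_pd_parts:
  assumes pd: "path_decomp V E B" and pr: "proper_pd B" and l: "2 \<le> length B"
  shows "strict_chain (length B - 1) (pd_left B) (pd_right B)"
  unfolding strict_chain_def
proof (intro allI impI conjI)
  fix k assume "k \<le> length B - 1"
  then have k: "k < length B" using l by simp
  have bag: "pd_left B (Suc k) \<inter> pd_right B k = B ! k" by (rule bag_eq_pd_parts[OF pd k])
  have not_sub: "\<not> B ! i \<subseteq> B ! j" if "i < length B" "j < length B" "i \<noteq> j" for i j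
    using pr that unfolding proper_pd_def by blast
  obtain x where x: "x \<in> B ! k" "0 < k \<longrightarrow> x \<notin> B ! (k - 1)"
    using not_sub[of k "k - 1"] not_sub[of 0 1] k l by (cases k) auto
  have "x \<notin> pd_left B k"
  proof
    assume "x \<in> pd_left B k"
    then obtain i where "i < k" "x \<in> B ! i" unfolding pd_left_def by auto
    moreover have "i \<le> k - 1" "k - 1 \<le> k" using \<open>i < k\<close> by auto
    ultimately show False using x path_decomp_convex[OF pd, of x i k "k - 1"] k by blast
  qed
  then show "\<exists>x. x \<in> pd_left B (Suc k) \<and> x \<in> pd_right B k \<and> x \<notin> pd_left B k" using bag x by blast
  obtain y where y: "y \<in> B ! k" "Suc k < length B \<longrightarrow> y \<notin> B ! (Suc k)"
  proof (cases "Suc k < length B")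
    case False
    then have "k \<noteq> 0" using l by simp
    then have "\<not> B ! k \<subseteq> B ! 0" using not_sub[OF k, of 0] k by linarith
    then obtain y where "y \<in> B ! k" "y \<notin> B ! 0" by blast
    then show ?thesis using that False by blast
  qed (use that not_sub[of k "Suc k"] in auto)
  have "y \<notin> pd_right B (Suc k)"
  proof
    assume "y \<in> pd_right B (Suc k)"
    then obtain j where "Suc k \<le> j" "j < length B" "y \<in> B ! j" unfolding pd_right_def by auto
    then show False using y path_decomp_convex[OF pd, of y k j "Suc k"] by auto
  qed
  then show "\<exists>y. y \<in> pd_left B (Suc k) \<and> y \<in> pd_right B k \<and> y \<notin> pd_right B (Suc k)" using bag y by blast
qed

definition sep_between ::
    "nat set \<Rightarrow> (nat \<Rightarrow> nat \<Rightarrow> bool) \<Rightarrow> (nat \<Rightarrow> nat set) \<Rightarrow> (nat \<Rightarrow> nat set) \<Rightarrow> nat \<Rightarrow> nat \<Rightarrow> nat set \<Rightarrow> nat set \<Rightarrow> bool" where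
  "sep_between V E L R i j A B \<longleftrightarrow> separation V E A B \<and> L i \<subseteq> A \<and> A \<subseteq> L j \<and> R j \<subseteq> B \<and> B \<subseteq> R i"

text \<open>The gaps \<open>hi j < lo (j + 1)\<close> keep at least one step of the old chain strictly between
  consecutive new separations; this is what makes the coarser chain strict.\<close>

lemma sep_chain_coarsen:
  assumes c: "sep_chain V E m L R" and p: "strict_chain m L R"
    and between: "\<And>j. j \<le> Suc m' \<Longrightarrow> lo j \<le> hi j \<and> hi j \<le> Suc m \<and> sep_between V E L R (lo j) (hi j) (A j) (B j)"
    and gaps: "\<And>j. j \<le> m' \<Longrightarrow> hi j < lo (Suc j)"
    and ends: "lo 0 = 0" "hi 0 = 0" "lo (Suc m') = Suc m" "hi (Suc m') = Suc m"
  shows "sep_chain V E m' A B \<and> strict_chain m' A B"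
proof
  have L0: "L 0 = {}" "R 0 = V" "L (Suc m) = V" "R (Suc m) = {}" using c unfolding sep_chain_def by auto
  have b: "separation V E (A j) (B j)" "L (lo j) \<subseteq> A j" "A j \<subseteq> L (hi j)" "R (hi j) \<subseteq> B j" "B j \<subseteq> R (lo j)"
    if "j \<le> Suc m'" for j
    using between[OF that] unfolding sep_between_def by auto
  have lo_le: "lo (Suc j) \<le> Suc m" if "j \<le> m'" for j
    using between[of "Suc j"] gaps[OF that] that by simp
  show "sep_chain V E m' A B" unfolding sep_chain_def
  proof (intro conjI allI impI)
    show "A 0 = {}" "B (Suc m') = {}" using b[of 0] b[of "Suc m'"] ends L0 by auto
    show "B 0 = V" "A (Suc m') = V" using b[of 0] b[of "Suc m'"] ends L0 unfolding separation_def by auto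
  next
    fix k assume "k \<le> Suc m'" then show "separation V E (A k) (B k)" using b by blast
  next
    fix k assume k: "k \<le> m'"
    have "L (hi k) \<subseteq> L (lo (Suc k))" "R (lo (Suc k)) \<subseteq> R (hi k)"
      using sep_chain_mono[OF c, of "hi k" "lo (Suc k)"] gaps[OF k] lo_le[OF k] by auto
    then show "A k \<subseteq> A (Suc k)" "B (Suc k) \<subseteq> B k" using b[of k] b[of "Suc k"] k by auto
  qed
  show "strict_chain m' A B" unfolding strict_chain_def
  proof (intro allI impI conjI)
    fix j assume j: "j \<le> m'"
    define i where "i = hi j"
    define i' where "i' = lo (Suc j)"
    have ii: "i < i'" "i' \<le> Suc m" using gaps[OF j] lo_le[OF j] unfolding i_def i'_def by auto
    have bj: "A j \<subseteq> L i" "R i \<subseteq> B j" "L i' \<subseteq> A (Suc j)" "B (Suc j) \<subseteq> R i'"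
      using b[of j] b[of "Suc j"] j unfolding i_def i'_def by auto
    have "i \<le> m" using ii by simp
    then obtain x where x: "x \<in> L (Suc i)" "x \<in> R i" "x \<notin> L i" using p unfolding strict_chain_def by blast
    have "L (Suc i) \<subseteq> L i'" using sep_chain_mono[OF c, of "Suc i" i'] ii by auto
    then show "\<exists>x. x \<in> A (Suc j) \<and> x \<in> B j \<and> x \<notin> A j" using x bj by blast
    have s: "Suc (i' - 1) = i'" using ii by simp
    obtain y where y: "y \<in> L i'" "y \<in> R (i' - 1)" "y \<notin> R i'"
      using p ii s unfolding strict_chain_def by (metis Suc_le_mono)
    have "R (i' - 1) \<subseteq> R i" using sep_chain_mono[OF c, of i "i' - 1"] ii by auto
    then show "\<exists>y. y \<in> A (Suc j) \<and> y \<in> B j \<and> y \<notin> B (Suc j)" using y bj by blast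
  qed
qed

lemma separation_within_window:
  assumes g: "graph V E" and c: "sep_chain V E m L R" and ij: "i \<le> j" "j \<le> Suc m"
    and s: "separation V E A B" and XA: "L i \<inter> R i \<subseteq> A" and YB: "L j \<inter> R j \<subseteq> B"
  shows "sep_between V E L R i j ((A \<inter> L j) \<union> L i) ((B \<union> R j) \<inter> R i)"
    and "((A \<inter> L j) \<union> L i) \<inter> ((B \<union> R j) \<inter> R i) \<subseteq> A \<inter> B"
proof -
  have si: "separation V E (L i) (R i)" and sj: "separation V E (L j) (R j)"
    using sep_chainD(1)[OF c] ij by auto
  have mo: "L i \<subseteq> L j" "R j \<subseteq> R i" using sep_chain_mono[OF c ij] by auto
  have Ui: "L i \<union> R i = V" and Uj: "L j \<union> R j = V" and U: "A \<union> B = V"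
    using si sj s unfolding separation_def by auto
  have "separation V E ((A \<inter> L j) \<union> L i) ((B \<union> R j) \<inter> R i)" unfolding separation_def
  proof (intro conjI allI impI)
    show "A \<inter> L j \<union> L i \<union> (B \<union> R j) \<inter> R i = V" using Ui Uj U mo by blast
  next
    fix u v assume h: "E u v" "u \<in> A \<inter> L j \<union> L i" "u \<notin> (B \<union> R j) \<inter> R i"
    have uV: "u \<in> V" using g h unfolding graph_def by blast
    show "v \<in> A \<inter> L j \<union> L i"
    proof (cases "u \<in> R i")
      case False
      then have "u \<in> L i" using h uV Ui by blast
      then show ?thesis using si h False unfolding separation_def by blast
    next
      case True
      then have u: "u \<notin> B" "u \<notin> R j" using h by auto
      then have "u \<in> A" "u \<in> L j" using uV U Uj by auto
      then show ?thesis using s sj h u unfolding separation_def by blast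
    qed
  qed
  then show "sep_between V E L R i j ((A \<inter> L j) \<union> L i) ((B \<union> R j) \<inter> R i)"
    unfolding sep_between_def using mo by blast
  show "((A \<inter> L j) \<union> L i) \<inter> ((B \<union> R j) \<inter> R i) \<subseteq> A \<inter> B" using XA YB mo by blast
qed

section \<open>Paths and linkages\<close>

lemma gpath_Cons:
  "gpath V E (a # q) \<longleftrightarrow> a \<in> V \<and> a \<notin> set q \<and> (q = [] \<or> (gpath V E q \<and> E a (hd q)))"
proof -
  have "(\<forall>i. i + 1 < length (a # q) \<longrightarrow> E ((a # q) ! i) ((a # q) ! (i + 1)))
      \<longleftrightarrow> (q \<noteq> [] \<longrightarrow> E a (hd q)) \<and> (\<forall>i. i + 1 < length q \<longrightarrow> E (q ! i) (q ! (i + 1)))"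
    by (cases q) (auto simp: nth_Cons split: nat.split)
  then show ?thesis unfolding gpath_def by auto
qed

lemma gpath_not_Nil: "gpath V E p \<Longrightarrow> p \<noteq> []"
  unfolding gpath_def by simp

lemma gpath_append:
  assumes "xs \<noteq> []" "ys \<noteq> []"
  shows "gpath V E (xs @ ys) \<longleftrightarrow> gpath V E xs \<and> gpath V E ys \<and> set xs \<inter> set ys = {} \<and> E (last xs) (hd ys)"
  using assms(1) by (induction xs rule: list_nonempty_induct) (use assms(2) in \<open>auto simp: gpath_Cons\<close>)

lemma gpath_take:
  assumes "gpath V E p" "0 < n"
  shows "gpath V E (take n p)"
proof (cases "drop n p = []")
  case False
  have "take n p \<noteq> []" using assms gpath_not_Nil[OF assms(1)] by simp
  then show ?thesis using gpath_append[OF _ False, of "take n p" V E] assms(1) by simp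
qed (use assms in simp)

lemma gpath_butlast:
  assumes "gpath V E p" "butlast p \<noteq> []"
  shows "gpath V E (butlast p) \<and> E (last (butlast p)) (last p)"
proof -
  have "gpath V E (butlast p @ [last p])" using assms(1) gpath_not_Nil[OF assms(1)] by simp
  then show ?thesis using gpath_append[OF assms(2), of "[last p]" V E] by simp
qed

lemma gpath_join:
  assumes q: "gpath V E q" and r: "gpath V E r" and qr: "last q = hd r" "set (butlast q) \<inter> set r = {}"
  shows "gpath V E (butlast q @ r) \<and> hd (butlast q @ r) = hd q"
proof (cases "butlast q = []")
  case True
  have "q = butlast q @ [last q]" using gpath_not_Nil[OF q] by simp
  then have "hd q = last q" using True by (metis append_Nil list.sel(1))
  then show ?thesis using True r qr by simp
next
  case False
  have "gpath V E (butlast q @ r)"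
    using gpath_append[OF False gpath_not_Nil[OF r]] gpath_butlast[OF q False] r qr by simp
  moreover have "q = butlast q @ [last q]" using gpath_not_Nil[OF q] by simp
  then have "hd (butlast q @ r) = hd q" using False by (metis hd_append2)
  ultimately show ?thesis by blast
qed

lemma gpath_subgraph:
  assumes "gpath V E p" "\<And>u v. E u v \<Longrightarrow> E' u v"
  shows "gpath V E' p"
  using assms unfolding gpath_def by blast

lemma gpath_rev:
  assumes g: "graph V E" and p: "gpath V E p"
  shows "gpath V E (rev p)"
  using p
proof (induction p)
  case (Cons a q)
  show ?case
  proof (cases "q = []")
    case False
    have h: "a \<in> V" "a \<notin> set q" "gpath V E q" "E (hd q) a"
      using Cons.prems False g unfolding graph_def by (auto simp: gpath_Cons)
    moreover have "last (rev q) = hd q" using False by (simp add: last_rev)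
    moreover have "gpath V E [a]" using h(1) by (simp add: gpath_def)
    ultimately show ?thesis using gpath_append[of "rev q" "[a]" V E] Cons.IH False by simp
  qed (use Cons.prems in simp)
qed (simp add: gpath_def)

definition linkage :: "nat set \<Rightarrow> (nat \<Rightarrow> nat \<Rightarrow> bool) \<Rightarrow> nat set \<Rightarrow> nat set \<Rightarrow> nat list set \<Rightarrow> bool" where
  "linkage V E X Y P \<longleftrightarrow> finite P \<and> (\<forall>p\<in>P. gpath V E p \<and> hd p \<in> X \<and> last p \<in> Y)
     \<and> (\<forall>p\<in>P. \<forall>q\<in>P. p \<noteq> q \<longrightarrow> set p \<inter> set q = {})"

lemma linkageD:
  assumes "linkage V E X Y P" "p \<in> P"
  shows "gpath V E p" "hd p \<in> X" "last p \<in> Y" "p \<noteq> []"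
proof -
  show "gpath V E p" "hd p \<in> X" "last p \<in> Y" using assms unfolding linkage_def by auto
  then show "p \<noteq> []" using gpath_not_Nil by blast
qed

lemma linkage_disjoint:
  assumes "linkage V E X Y P" "p \<in> P" "q \<in> P" "v \<in> set p" "v \<in> set q"
  shows "p = q"
  using assms unfolding linkage_def by blast

lemma disjoint_paths_linkage:
  assumes L: "linkage V E X Y P"
  shows "disjoint_paths V E (card P) X Y"
proof -
  have "finite P" using L unfolding linkage_def by simp
  then obtain Ps where Ps: "set Ps = P" "distinct Ps" using finite_distinct_list by blast
  then have len: "length Ps = card P" by (metis distinct_card)
  show ?thesis unfolding disjoint_paths_def
  proof (intro exI[of _ Ps] conjI allI impI)
    show "length Ps = card P" by (rule len)
  next
    fix k assume "k < card P"
    then have "Ps ! k \<in> P" using Ps len by (metis nth_mem)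
    then show "gpath V E (Ps ! k)" "hd (Ps ! k) \<in> X" "last (Ps ! k) \<in> Y" using linkageD[OF L] by auto
  next
    fix k l assume "k < card P" "l < card P" "k \<noteq> l"
    then have "Ps ! k \<in> P" "Ps ! l \<in> P" "Ps ! k \<noteq> Ps ! l" using Ps len by (auto simp: nth_eq_iff_index_eq)
    then show "set (Ps ! k) \<inter> set (Ps ! l) = {}" using L unfolding linkage_def by auto
  qed
qed

lemma linkage_subgraph:
  assumes "linkage V E X Y P" "\<And>u v. E u v \<Longrightarrow> E' u v"
  shows "linkage V E' X Y P"
proof -
  have "gpath V E' p" if "p \<in> P" for p using gpath_subgraph[OF linkageD(1)[OF assms(1) that] assms(2)] .
  then show ?thesis using assms(1) unfolding linkage_def by simp
qed

lemma gpath_prefix_first_hit: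
  assumes p: "gpath V E p" and l: "last p \<in> Y"
  shows "\<exists>q. gpath V E q \<and> hd q = hd p \<and> last q \<in> Y \<and> set q \<subseteq> set p \<and> set (butlast q) \<inter> Y = {}"
proof -
  have ne: "p \<noteq> []" using gpath_not_Nil[OF p] .
  have ex: "\<exists>i. p ! i \<in> Y" using l ne by (intro exI[of _ "length p - 1"]) (simp add: last_conv_nth)
  define n where "n = (LEAST i. p ! i \<in> Y)"
  have n1: "p ! n \<in> Y" unfolding n_def by (rule LeastI_ex[OF ex])
  have "n \<le> length p - 1" unfolding n_def using l ne by (intro Least_le) (simp add: last_conv_nth)
  then have nl: "n < length p" using ne by (cases p) auto
  define q where "q = take (Suc n) p"
  have q: "q = take n p @ [p ! n]" unfolding q_def using nl by (simp add: take_Suc_conv_app_nth)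
  have "v \<notin> Y" if v: "v \<in> set (take n p)" for v
  proof -
    obtain i where "i < n" "v = p ! i" using v nl by (auto simp: in_set_conv_nth)
    then show "v \<notin> Y" using not_less_Least[of i "\<lambda>i. p ! i \<in> Y"] unfolding n_def by auto
  qed
  moreover have "gpath V E q" unfolding q_def by (rule gpath_take[OF p]) simp
  moreover have "hd q = hd p" unfolding q_def using ne by (cases p) auto
  moreover have "set q \<subseteq> set p" unfolding q_def by (rule set_take_subset)
  ultimately show ?thesis using q n1 by (intro exI[of _ q]) auto
qed

lemma linkage_shorten_end:
  assumes L: "linkage V E X Y P"
  shows "\<exists>P'. linkage V E X Y P' \<and> card P' = card P \<and> (\<forall>p\<in>P'. set (butlast p) \<inter> Y = {})"
proof -
  define short where "short p q \<longleftrightarrow> gpath V E q \<and> hd q = hd p \<and> last q \<in> Y \<and> set q \<subseteq> set p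
    \<and> set (butlast q) \<inter> Y = {}" for p q
  define t where "t p = (SOME q. short p q)" for p
  have t: "short p (t p)" if "p \<in> P" for p
  proof -
    have "\<exists>q. short p q" unfolding short_def by (rule gpath_prefix_first_hit[OF linkageD(1,3)[OF L that]])
    then show ?thesis unfolding t_def by (rule someI_ex)
  qed
  have inj: "inj_on t P"
  proof (rule inj_onI)
    fix p p' assume h: "p \<in> P" "p' \<in> P" "t p = t p'"
    have "hd p = hd p'" using t[OF h(1)] t[OF h(2)] h(3) unfolding short_def by metis
    moreover have "hd p' \<in> set p'" using linkageD(4)[OF L h(2)] by (rule hd_in_set)
    ultimately have "hd p \<in> set p'" by simp
    then show "p = p'" by (rule linkage_disjoint[OF L h(1,2) hd_in_set[OF linkageD(4)[OF L h(1)]]])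
  qed
  have "linkage V E X Y (t ` P)"
    unfolding linkage_def
  proof (intro conjI ballI impI)
    show "finite (t ` P)" using L unfolding linkage_def by simp
  next
    fix q assume "q \<in> t ` P"
    then obtain p where p: "p \<in> P" "q = t p" by blast
    then show "gpath V E q" "hd q \<in> X" "last q \<in> Y" using t[OF p(1)] linkageD(2)[OF L p(1)] unfolding short_def by auto
  next
    fix q q' assume "q \<in> t ` P" "q' \<in> t ` P" "q \<noteq> q'"
    then obtain p p' where p: "p \<in> P" "p' \<in> P" "q = t p" "q' = t p'" "p \<noteq> p'" by blast
    then have "set p \<inter> set p' = {}" using L unfolding linkage_def by blast
    then show "set q \<inter> set q' = {}" using t[OF p(1)] t[OF p(2)] p(3,4) unfolding short_def by blast
  qed
  moreover have "\<forall>q\<in>t ` P. set (butlast q) \<inter> Y = {}" using t unfolding short_def by blast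
  ultimately show ?thesis using card_image[OF inj] by blast
qed

lemma linkage_rev:
  assumes g: "graph V E" and L: "linkage V E X Y P"
  shows "linkage V E Y X (rev ` P)" "card (rev ` P) = card P"
proof -
  show "card (rev ` P) = card P" by (rule card_image) (simp add: inj_on_def)
  show "linkage V E Y X (rev ` P)"
    using L gpath_rev[OF g] linkageD(4)[OF L] unfolding linkage_def by (auto simp: hd_rev last_rev)
qed

lemma linkage_shorten_start:
  assumes g: "graph V E" and L: "linkage V E X Y P"
  shows "\<exists>P'. linkage V E X Y P' \<and> card P' = card P \<and> (\<forall>p\<in>P'. set (tl p) \<inter> X = {})"
proof -
  obtain P1 where P1: "linkage V E Y X P1" "card P1 = card P" "\<forall>p\<in>P1. set (butlast p) \<inter> X = {}"
    using linkage_shorten_end[OF linkage_rev(1)[OF g L]] linkage_rev(2)[OF g L] by auto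
  have "set (tl (rev p)) = set (butlast p)" for p :: "nat list"
    by (metis butlast_rev rev_rev_ident set_rev)
  then show ?thesis using linkage_rev[OF g P1(1)] P1(2,3) by (intro exI[of _ "rev ` P1"]) auto
qed

lemma gpath_in_side:
  assumes s: "separation V E A B" and p: "gpath V E p" and h: "hd p \<in> A"
    and b: "set (butlast p) \<inter> (A \<inter> B) = {}"
  shows "set p \<subseteq> A" "set (butlast p) \<subseteq> A - B"
proof -
  have "set p \<subseteq> A \<and> set (butlast p) \<subseteq> A - B" using p h b
  proof (induction p)
    case (Cons a q)
    show ?case
    proof (cases "q = []")
      case False
      have a: "a \<in> A" "a \<notin> B" using Cons.prems False by auto
      have q: "gpath V E q" "E a (hd q)" using Cons.prems(1) False by (auto simp: gpath_Cons)
      have "hd q \<in> A" using s q(2) a unfolding separation_def by blast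
      then show ?thesis using Cons.IH q a False Cons.prems(3) by simp
    qed (use Cons.prems in simp)
  qed (simp add: gpath_def)
  then show "set p \<subseteq> A" "set (butlast p) \<subseteq> A - B" by auto
qed

lemma gpath_in_side_rev:
  assumes g: "graph V E" and s: "separation V E A B" and p: "gpath V E p" and h: "last p \<in> B"
    and b: "set (tl p) \<inter> (A \<inter> B) = {}"
  shows "set p \<subseteq> B" "set (tl p) \<subseteq> B - A"
proof -
  have ne: "p \<noteq> []" using gpath_not_Nil[OF p] .
  have bl: "set (butlast (rev p)) = set (tl p)" by (simp add: butlast_rev)
  have "hd (rev p) \<in> B" using h ne by (simp add: hd_rev)
  moreover have "set (butlast (rev p)) \<inter> (B \<inter> A) = {}" using b bl by blast
  ultimately have "set (rev p) \<subseteq> B" "set (butlast (rev p)) \<subseteq> B - A"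
    using gpath_in_side[OF separation_swap[OF g s] gpath_rev[OF g p]] by blast+
  then show "set p \<subseteq> B" "set (tl p) \<subseteq> B - A" using bl by simp_all
qed

lemma linkage_endpoints_onto:
  assumes L: "linkage V E X Y P" and S: "finite S" "card S \<le> card P"
    and f: "\<And>p. p \<in> P \<Longrightarrow> f p \<in> set p \<inter> S"
  shows "inj_on f P" "f ` P = S"
proof -
  show inj: "inj_on f P"
  proof (rule inj_onI)
    fix p q assume "p \<in> P" "q \<in> P" "f p = f q"
    then show "p = q" using linkage_disjoint[OF L, of p q "f p"] f[of p] f[of q] by simp
  qed
  have "f ` P \<subseteq> S" using f by blast
  moreover have "card (f ` P) = card P" using card_image[OF inj] .
  ultimately show "f ` P = S" using S by (metis card_seteq)
qed

lemma linkage_to_separator_in_side: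
  assumes s: "separation V E A B" and L: "linkage V E X (A \<inter> B) P" and XA: "X \<subseteq> A"
  shows "\<exists>Q. linkage V E X (A \<inter> B) Q \<and> card Q = card P \<and> (\<forall>q\<in>Q. set q \<subseteq> A \<and> set (butlast q) \<subseteq> A - B)"
proof -
  obtain Q where Q: "linkage V E X (A \<inter> B) Q" "card Q = card P" "\<forall>q\<in>Q. set (butlast q) \<inter> (A \<inter> B) = {}"
    using linkage_shorten_end[OF L] by blast
  have "set q \<subseteq> A \<and> set (butlast q) \<subseteq> A - B" if "q \<in> Q" for q
    using gpath_in_side[OF s linkageD(1)[OF Q(1) that]] linkageD(2)[OF Q(1) that] XA Q(3) that by blast
  then show ?thesis using Q by blast
qed

lemma linkage_from_separator_in_side:
  assumes g: "graph V E" and s: "separation V E A B" and L: "linkage V E (A \<inter> B) Y P" and YB: "Y \<subseteq> B"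
  shows "\<exists>Q. linkage V E (A \<inter> B) Y Q \<and> card Q = card P \<and> (\<forall>q\<in>Q. set q \<subseteq> B)"
proof -
  obtain Q where Q: "linkage V E (A \<inter> B) Y Q" "card Q = card P" "\<forall>q\<in>Q. set (tl q) \<inter> (A \<inter> B) = {}"
    using linkage_shorten_start[OF g L] by blast
  have "set q \<subseteq> B" if "q \<in> Q" for q
    using gpath_in_side_rev[OF g s linkageD(1)[OF Q(1) that]] linkageD(3)[OF Q(1) that] YB Q(3) that by blast
  then show ?thesis using Q by blast
qed

lemma gpath_glue:
  assumes q: "gpath V E q" and r: "gpath V E r" and e: "E x y"
    and hd_r: "hd r = (if last q = x then y else last q)"
    and disj: "set (if last q = x then q else butlast q) \<inter> set r = {}"
  shows "gpath V E ((if last q = x then q else butlast q) @ r)"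
    and "hd ((if last q = x then q else butlast q) @ r) = hd q"
proof -
  have "gpath V E ((if last q = x then q else butlast q) @ r)
      \<and> hd ((if last q = x then q else butlast q) @ r) = hd q"
  proof (cases "last q = x")
    case True
    then show ?thesis
      using gpath_append[OF gpath_not_Nil[OF q] gpath_not_Nil[OF r]] q r e hd_r disj gpath_not_Nil[OF q] by simp
  next
    case False
    then show ?thesis using gpath_join[OF q r] hd_r disj by simp
  qed
  then show "gpath V E ((if last q = x then q else butlast q) @ r)"
    "hd ((if last q = x then q else butlast q) @ r) = hd q" by auto
qed

section \<open>Menger's theorem\<close>

text \<open>Deleting the edge \<open>xy\<close> leaves a separation \<open>(A, B)\<close>
  of order less than \<open>p\<close>; we join \<open>p\<close> disjoint paths from \<open>X\<close> to the separator of
  \<open>(A, B \<union> {x})\<close> with \<open>p\<close> disjoint paths from the separator of \<open>(A \<union> {y}, B)\<close> to \<open>Y\<close>, crossing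
  by the edge \<open>xy\<close> at \<open>x\<close>. Both separators have at most \<open>p\<close> elements, so both families hit all of
  them; the first family lives in \<open>A\<close> and, apart from its ends, avoids \<open>B\<close>, while the second
  lives in \<open>B\<close>, so the joined paths stay disjoint.\<close>

lemma linkage_glue:
  assumes g: "graph V E"
    and sA: "separation V E A (insert x B)" and sB: "separation V E (insert y A) B"
    and x: "x \<in> A" "x \<notin> B" and y: "y \<in> B" "y \<notin> A" and exy: "E x y"
    and P1: "linkage V E X (A \<inter> insert x B) P1" "card P1 = p"
    and P2: "linkage V E (insert y A \<inter> B) Y P2" "card P2 = p"
    and XA: "X \<subseteq> A" and YB: "Y \<subseteq> B" and small: "card (A \<inter> B) < p"
  shows "\<exists>P. linkage V E X Y P \<and> card P = p"
proof -
  define Sx where "Sx = A \<inter> insert x B"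
  define Sy where "Sy = insert y A \<inter> B"
  have S: "Sx = insert x (A \<inter> B)" "Sy = insert y (A \<inter> B)" unfolding Sx_def Sy_def using x y by auto
  have "finite V" using g unfolding graph_def by simp
  moreover have "A \<subseteq> V" using sA unfolding separation_def by blast
  ultimately have fin: "finite Sx" "finite Sy" unfolding S by (auto intro: finite_subset)
  have card_S: "card Sx \<le> p" "card Sy \<le> p" using small fin unfolding S by (auto simp: card_insert_if)
  obtain Q1 where Q1: "linkage V E X Sx Q1" "card Q1 = p"
      "\<forall>q\<in>Q1. set q \<subseteq> A \<and> set (butlast q) \<subseteq> A - insert x B"
    using linkage_to_separator_in_side[OF sA P1(1) XA] P1(2) unfolding Sx_def by blast
  obtain Q2 where Q2: "linkage V E Sy Y Q2" "card Q2 = p" "\<forall>q\<in>Q2. set q \<subseteq> B"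
    using linkage_from_separator_in_side[OF g sB P2(1) YB] P2(2) unfolding Sy_def by blast
  have ends1: "inj_on last Q1" "last ` Q1 = Sx"
    using linkage_endpoints_onto[OF Q1(1) fin(1), of last] card_S Q1(2) linkageD(3,4)[OF Q1(1)] by auto
  have ends2: "inj_on hd Q2" "hd ` Q2 = Sy"
    using linkage_endpoints_onto[OF Q2(1) fin(2), of hd] card_S Q2(2) linkageD(2,4)[OF Q2(1)] by auto
  define \<tau> where "\<tau> v = (if v = x then y else v)" for v
  have \<tau>: "\<tau> v \<in> Sy" if "v \<in> Sx" for v using that unfolding \<tau>_def S by auto
  have \<tau>_inj: "inj_on \<tau> Sx" using y unfolding inj_on_def \<tau>_def S by auto
  define Q where "Q q = the_inv_into Q2 hd (\<tau> (last q))" for q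
  have Q: "Q q \<in> Q2" "hd (Q q) = \<tau> (last q)" if "q \<in> Q1" for q
  proof -
    have "\<tau> (last q) \<in> hd ` Q2" using \<tau>[of "last q"] ends1(2) ends2(2) that by blast
    then show "Q q \<in> Q2" "hd (Q q) = \<tau> (last q)"
      unfolding Q_def by (simp_all add: the_inv_into_into[OF ends2(1)] f_the_inv_into_f[OF ends2(1)])
  qed
  define front where "front q = (if last q = x then q else butlast q)" for q
  have front: "set (front q) \<subseteq> set q - B" if "q \<in> Q1" for q
  proof -
    have "q = butlast q @ [last q]" using linkageD(4)[OF Q1(1) that] by simp
    then have "set q = insert (last q) (set (butlast q))" by (metis Un_insert_right list.set(1,2) set_append sup_bot.right_neutral)
    then show ?thesis using Q1(3) that x in_set_butlastD[of _ q] unfolding front_def by auto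
  qed
  define C where "C q = front q @ Q q" for q
  have C: "gpath V E (C q)" "hd (C q) = hd q" "last (C q) \<in> Y" if q: "q \<in> Q1" for q
  proof -
    have "set (front q) \<inter> set (Q q) = {}" using front[OF q] Q2(3) Q(1)[OF q] by blast
    then show "gpath V E (C q)" "hd (C q) = hd q"
      using gpath_glue[OF linkageD(1)[OF Q1(1) q] linkageD(1)[OF Q2(1) Q(1)[OF q]] exy] Q(2)[OF q]
      unfolding C_def front_def \<tau>_def by auto
    show "last (C q) \<in> Y" using linkageD(3,4)[OF Q2(1) Q(1)[OF q]] unfolding C_def by simp
  qed
  have Q_inj: "Q q = Q q' \<Longrightarrow> q = q'" if "q \<in> Q1" "q' \<in> Q1" for q q'
    using Q[OF that(1)] Q[OF that(2)] inj_onD[OF \<tau>_inj] inj_onD[OF ends1(1)] that ends1(2) by (metis imageI)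
  have disjoint: "set (C q) \<inter> set (C q') = {}" if "q \<in> Q1" "q' \<in> Q1" "q \<noteq> q'" for q q'
  proof -
    have "set q \<inter> set q' = {}" "set (Q q) \<inter> set (Q q') = {}"
      using that Q_inj Q Q1(1) Q2(1) unfolding linkage_def by blast+
    moreover have "set (Q q) \<subseteq> B" "set (Q q') \<subseteq> B" using Q2(3) Q(1) that by blast+
    ultimately show ?thesis using front[OF that(1)] front[OF that(2)] unfolding C_def by auto
  qed
  have C_inj: "inj_on C Q1"
  proof (rule inj_onI)
    fix q q' assume h: "q \<in> Q1" "q' \<in> Q1" "C q = C q'"
    have "C q \<noteq> []" using linkageD(4)[OF Q2(1) Q(1)[OF h(1)]] unfolding C_def by simp
    then show "q = q'" using disjoint[OF h(1,2)] h(3) by (metis Int_absorb set_empty)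
  qed
  have "linkage V E X Y (C ` Q1)"
    unfolding linkage_def
  proof (intro conjI ballI impI)
    show "finite (C ` Q1)" using Q1(1) unfolding linkage_def by simp
  next
    fix r assume "r \<in> C ` Q1"
    then show "gpath V E r" "hd r \<in> X" "last r \<in> Y" using C linkageD(2)[OF Q1(1)] by auto
  next
    fix r r' assume "r \<in> C ` Q1" "r' \<in> C ` Q1" "r \<noteq> r'"
    then show "set r \<inter> set r' = {}" using disjoint by blast
  qed
  then show ?thesis using card_image[OF C_inj] Q1(2) by blast
qed

lemma menger_edgeless:
  assumes g: "graph V E" and no_edge: "\<And>u v. \<not> E u v" and X: "X \<subseteq> V" and Y: "Y \<subseteq> V"
    and order: "\<And>A B. separation V E A B \<Longrightarrow> X \<subseteq> A \<Longrightarrow> Y \<subseteq> B \<Longrightarrow> p \<le> card (A \<inter> B)"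
  shows "\<exists>P. linkage V E X Y P \<and> card P = p"
proof -
  have "separation V E X (V - X \<union> X \<inter> Y)" using X no_edge unfolding separation_def by auto
  moreover have "Y \<subseteq> V - X \<union> X \<inter> Y" "X \<inter> (V - X \<union> X \<inter> Y) = X \<inter> Y" using Y by auto
  ultimately have "p \<le> card (X \<inter> Y)" using order[of X "V - X \<union> X \<inter> Y"] by simp
  then obtain T where T: "T \<subseteq> X \<inter> Y" "card T = p" by (meson obtain_subset_with_card_n)
  have "finite V" using g unfolding graph_def by simp
  then have "finite T" using T X by (meson finite_subset inf.coboundedI1)
  moreover have "inj_on (\<lambda>v. [v]) T" by (simp add: inj_on_def)
  ultimately show ?thesis using T X card_image[of "\<lambda>v. [v]" T]
    by (intro exI[of _ "(\<lambda>v. [v]) ` T"]) (auto simp: linkage_def gpath_def)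
qed

lemma separation_meet:
  assumes s: "separation V E A B" and s': "separation V E' A' B'"
    and edges: "\<And>u v. E u v \<Longrightarrow> u \<in> A \<Longrightarrow> u \<notin> B \<Longrightarrow> E' u v"
  shows "separation V E (A \<inter> A') (B \<union> B')"
  using assms unfolding separation_def by blast

lemma separation_delete_edge:
  assumes s: "separation V E' A B" and E': "\<And>u v. E' u v \<longleftrightarrow> E u v \<and> {u, v} \<noteq> {x, y}"
    and x: "x \<in> A" and y: "y \<in> B" "y \<notin> A"
  shows "separation V E A (insert x B)" "separation V E (insert y A) B"
  using assms unfolding separation_def by (auto simp: doubleton_eq_iff)

lemma separators_large_after_edge_deletion:
  assumes g: "graph V E" and g': "graph V E'" and E': "\<And>u v. E' u v \<longleftrightarrow> E u v \<and> {u, v} \<noteq> {x, y}"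
    and sA: "separation V E A (insert x B)" and sB: "separation V E (insert y A) B"
    and x: "x \<in> A" and y: "y \<notin> A" and XA: "X \<subseteq> A" and YB: "Y \<subseteq> B"
    and order: "\<And>A B. separation V E A B \<Longrightarrow> X \<subseteq> A \<Longrightarrow> Y \<subseteq> B \<Longrightarrow> p \<le> card (A \<inter> B)"
  shows "\<And>A' B'. separation V E' A' B' \<Longrightarrow> X \<subseteq> A' \<Longrightarrow> A \<inter> insert x B \<subseteq> B' \<Longrightarrow> p \<le> card (A' \<inter> B')"
    and "\<And>A' B'. separation V E' A' B' \<Longrightarrow> insert y A \<inter> B \<subseteq> A' \<Longrightarrow> Y \<subseteq> B' \<Longrightarrow> p \<le> card (A' \<inter> B')"
proof -
  have bound: "p \<le> card (A' \<inter> B')"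
    if "separation V E A'' B''" "X \<subseteq> A''" "Y \<subseteq> B''" "A'' \<inter> B'' \<subseteq> A' \<inter> B'" "separation V E' A' B'"
    for A' B' A'' B''
  proof -
    have "finite V" using g unfolding graph_def by simp
    then have "finite (A' \<inter> B')" using that(5) unfolding separation_def by (metis finite_Int finite_Un)
    then show ?thesis using order[OF that(1-3)] card_mono[OF _ that(4)] by linarith
  qed
  show "p \<le> card (A' \<inter> B')" if s': "separation V E' A' B'" "X \<subseteq> A'" "A \<inter> insert x B \<subseteq> B'" for A' B'
  proof (rule bound[OF _ _ _ _ s'(1)])
    show "separation V E (A \<inter> A') (insert x B \<union> B')"
      using separation_meet[OF sA s'(1)] E' y by auto
  qed (use s' XA YB in auto)
  show "p \<le> card (A' \<inter> B')" if s': "separation V E' A' B'" "insert y A \<inter> B \<subseteq> A'" "Y \<subseteq> B'" for A' B'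
  proof (rule bound[OF _ _ _ _ s'(1)])
    have "separation V E (B \<inter> B') (insert y A \<union> A')"
      using separation_meet[OF separation_swap[OF g sB] separation_swap[OF g' s'(1)]] E' x
      by (auto simp: doubleton_eq_iff)
    then show "separation V E (insert y A \<union> A') (B \<inter> B')" by (rule separation_swap[OF g])
  qed (use s' XA YB in auto)
qed

text \<open>Menger's theorem, by induction on the number of edges: either deleting an edge \<open>xy\<close> keeps
  all \<open>X\<close>--\<open>Y\<close> separations of order at least \<open>p\<close>, or a small separation \<open>(A, B)\<close> of the smaller
  graph splits the problem into one from \<open>X\<close> to \<open>(A \<inter> B) \<union> {x}\<close> and one from \<open>(A \<inter> B) \<union> {y}\<close>
  to \<open>Y\<close>, both in the smaller graph, whose solutions are glued by \<open>linkage_glue\<close>.\<close>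

lemma menger_linkage:
  assumes "graph V E" "X \<subseteq> V" "Y \<subseteq> V"
    and "\<And>A B. separation V E A B \<Longrightarrow> X \<subseteq> A \<Longrightarrow> Y \<subseteq> B \<Longrightarrow> p \<le> card (A \<inter> B)"
  shows "\<exists>P. linkage V E X Y P \<and> card P = p"
  using assms
proof (induction "card {(u, v). E u v}" arbitrary: E X Y p rule: less_induct)
  case less
  note g = less.prems(1) and X = less.prems(2) and Y = less.prems(3) and order = less.prems(4)
  have finV: "finite V" using g unfolding graph_def by simp
  have EV: "E u v \<Longrightarrow> u \<in> V \<and> v \<in> V" for u v using g unfolding graph_def by blast
  show ?case
  proof (cases "\<exists>u v. E u v")
    case False
    then show ?thesis using menger_edgeless[OF g _ X Y order] by blast
  next
    case True
    then obtain x0 y0 where e0: "E x0 y0" by blast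
    define E' where "E' u v \<longleftrightarrow> E u v \<and> {u, v} \<noteq> {x0, y0}" for u v
    have g': "graph V E'" using g unfolding graph_def E'_def by (auto simp: insert_commute)
    have fewer: "card {(u, v). E' u v} < card {(u, v). E u v}"
    proof (rule psubset_card_mono)
      show "finite {(u, v). E u v}" by (rule finite_subset[of _ "V \<times> V"]) (use EV finV in auto)
      show "{(u, v). E' u v} \<subset> {(u, v). E u v}" using e0 unfolding E'_def by auto
    qed
    show ?thesis
    proof (cases "\<forall>A B. separation V E' A B \<and> X \<subseteq> A \<and> Y \<subseteq> B \<longrightarrow> p \<le> card (A \<inter> B)")
      case True
      then obtain P where "linkage V E' X Y P" "card P = p" using less.hyps[OF fewer g' X Y] by blast
      then show ?thesis using linkage_subgraph[of V E' X Y P E] unfolding E'_def by blast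
    next
      case False
      then obtain A B where AB: "separation V E' A B" "X \<subseteq> A" "Y \<subseteq> B" "card (A \<inter> B) < p" by auto
      have U: "A \<union> B = V" using AB(1) unfolding separation_def by simp
      have "\<not> separation V E A B" using AB order by (meson not_le)
      then obtain x y where xy: "E x y" "x \<in> A" "x \<notin> B" "y \<notin> A" using U unfolding separation_def by blast
      have "\<not> E' x y" using AB(1) xy unfolding separation_def by blast
      then have E': "E' u v \<longleftrightarrow> E u v \<and> {u, v} \<noteq> {x, y}" for u v using xy(1) unfolding E'_def by auto
      have yB: "y \<in> B" using EV[OF xy(1)] U xy(4) by blast
      have sA: "separation V E A (insert x B)" and sB: "separation V E (insert y A) B"
        using separation_delete_edge[OF AB(1) E' xy(2) yB xy(4)] by auto
      note large = separators_large_after_edge_deletion[OF g g' E' sA sB xy(2,4) AB(2,3) order]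
      have S: "A \<inter> insert x B \<subseteq> V" "insert y A \<inter> B \<subseteq> V" using U by auto
      obtain P1 where P1: "linkage V E' X (A \<inter> insert x B) P1" "card P1 = p"
        using less.hyps[OF fewer g' X S(1)] large(1) by blast
      obtain P2 where P2: "linkage V E' (insert y A \<inter> B) Y P2" "card P2 = p"
        using less.hyps[OF fewer g' S(2) Y] large(2) by blast
      show ?thesis
        using linkage_glue[OF g sA sB xy(2,3) yB xy(4,1)
            linkage_subgraph[OF P1(1)] P1(2) linkage_subgraph[OF P2(1)] P2(2) AB(2,3,4)]
        unfolding E'_def by blast
    qed
  qed
qed

lemma menger:
  assumes "graph V E" "X \<subseteq> V" "Y \<subseteq> V"
    and "\<And>A B. separation V E A B \<Longrightarrow> X \<subseteq> A \<Longrightarrow> Y \<subseteq> B \<Longrightarrow> p \<le> card (A \<inter> B)"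
  shows "disjoint_paths V E p X Y"
  using menger_linkage[OF assms] disjoint_paths_linkage by blast

section \<open>Linked path decompositions\<close>

lemma window_disjoint_paths:
  assumes g: "graph V E" and c: "sep_chain V E m L R" and se: "s \<le> e" "e \<le> Suc m"
    and tight: "\<And>A B. sep_between V E L R s e A B \<Longrightarrow> a \<le> card (A \<inter> B)"
  shows "disjoint_paths V E a (L s \<inter> R s) (L e \<inter> R e)"
proof (rule menger[OF g])
  show "L s \<inter> R s \<subseteq> V" "L e \<inter> R e \<subseteq> V" using sep_chainD(3)[OF c, of s] sep_chainD(3)[OF c, of e] se by auto
next
  fix A B assume AB: "separation V E A B" "L s \<inter> R s \<subseteq> A" "L e \<inter> R e \<subseteq> B"
  note clip = separation_within_window[OF g c se AB]
  have "finite V" using g unfolding graph_def by simp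
  then have "finite (A \<inter> B)" using AB(1) unfolding separation_def by (metis finite_Int finite_Un)
  then show "a \<le> card (A \<inter> B)" using tight[OF clip(1)] card_mono[OF _ clip(2)] by linarith
qed

lemma p_linked_window:
  assumes g: "graph V E" and c: "sep_chain V E m L R" and p: "strict_chain m L R"
    and se: "0 < s" "s \<le> e" "e \<le> m"
    and bags: "\<And>k. s \<le> k \<Longrightarrow> k < e \<Longrightarrow> card (L (Suc k) \<inter> R k) \<le> w + 1"
    and adh: "\<And>k. s \<le> k \<Longrightarrow> k \<le> e \<Longrightarrow> card (L k \<inter> R k) \<le> a"
    and tight: "\<And>A B. sep_between V E L R s e A B \<Longrightarrow> a \<le> card (A \<inter> B)"
  shows "\<exists>B'. path_decomp V E B' \<and> proper_pd B' \<and> p_linked V E B' a \<and> interior_width_le B' w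
    \<and> length B' = e - s + 2"
proof -
  have adh_eq: "card (L k \<inter> R k) = a" if "s \<le> k" "k \<le> e" for k
  proof -
    have "sep_between V E L R s e (L k) (R k)"
      using sep_chainD(1)[OF c] sep_chain_mono[OF c, of s k] sep_chain_mono[OF c, of k e] that se
      unfolding sep_between_def by auto
    then show ?thesis using tight adh[OF that] by (simp add: le_antisym)
  qed
  have linked: "disjoint_paths V E a (L s \<inter> R s) (L e \<inter> R e)"
    using window_disjoint_paths[OF g c _ _ tight] se by simp
  define \<sigma> where "\<sigma> j = (if j = 0 then 0 else if j \<le> e - s + 1 then s + j - 1 else Suc m)" for j
  have \<sigma>: "\<sigma> 0 = 0" "\<sigma> 1 = s" "\<sigma> (e - s + 1) = e" "\<sigma> (Suc (e - s + 1)) = Suc m"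
    "\<And>j. 0 < j \<Longrightarrow> j \<le> e - s + 1 \<Longrightarrow> \<sigma> j = s + j - 1" "\<And>j. \<sigma> j \<le> Suc m"
    unfolding \<sigma>_def using se by auto
  have chain': "sep_chain V E (e - s + 1) (L \<circ> \<sigma>) (R \<circ> \<sigma>) \<and> strict_chain (e - s + 1) (L \<circ> \<sigma>) (R \<circ> \<sigma>)"
  proof (rule sep_chain_coarsen[OF c p, where lo = \<sigma> and hi = \<sigma>])
    show "\<sigma> j \<le> \<sigma> j \<and> \<sigma> j \<le> Suc m \<and> sep_between V E L R (\<sigma> j) (\<sigma> j) ((L \<circ> \<sigma>) j) ((R \<circ> \<sigma>) j)" for j
      using sep_chainD(1)[OF c] \<sigma>(6) unfolding sep_between_def by auto
    show "\<sigma> j < \<sigma> (Suc j)" if "j \<le> e - s + 1" for j using that se unfolding \<sigma>_def by auto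
  qed (use \<sigma> in auto)
  define B' where "B' = chain_bags (e - s + 1) (L \<circ> \<sigma>) (R \<circ> \<sigma>)"
  have lenB': "length B' = e - s + 2" unfolding B'_def by simp
  have Lset: "Lset B' i = L (\<sigma> i) \<inter> R (\<sigma> i)" if "0 < i" "i \<le> e - s + 1" for i
    unfolding B'_def using Lset_chain_bags[OF chain'[THEN conjunct1] that] by simp
  have "p_linked V E B' a" unfolding p_linked_def
  proof (intro conjI allI impI)
    show "2 \<le> length B'" using lenB' by simp
  next
    fix i assume "0 < i \<and> i < length B'"
    then have i: "0 < i" "i \<le> e - s + 1" using lenB' by auto
    then have "s \<le> s + i - 1" "s + i - 1 \<le> e" using se by auto
    then show "card (Lset B' i) = a" using Lset[OF i] \<sigma>(5)[OF i] adh_eq by simp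
  next
    have "Rset B' 0 = L s \<inter> R s" unfolding B'_def
      using Rset_chain_bags_0[OF chain'[THEN conjunct1]] \<sigma>(2) by simp
    moreover have "Lset B' (length B' - 1) = L e \<inter> R e" using Lset[of "e - s + 1"] \<sigma>(3) lenB' by simp
    ultimately show "disjoint_paths V E a (Rset B' 0) (Lset B' (length B' - 1))" using linked by simp
  qed
  moreover have "interior_width_le B' w" unfolding interior_width_le_def
  proof (intro allI impI)
    fix i assume i: "0 < i \<and> i + 1 < length B'"
    then have "B' ! i = L (Suc (s + i - 1)) \<inter> R (s + i - 1)"
      unfolding B'_def using \<sigma>(5)[of i] \<sigma>(5)[of "Suc i"] lenB' se by auto
    moreover have "s \<le> s + i - 1" "s + i - 1 < e" "Suc (s + i - 1) = s + i" using i lenB' se by auto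
    ultimately show "card (B' ! i) \<le> w + 1" using bags[of "s + i - 1"] by simp
  qed
  moreover have "path_decomp V E B'" "proper_pd B'"
    unfolding B'_def using path_decomp_chain_bags[OF g] proper_pd_chain_bags chain' by blast+
  ultimately show ?thesis using lenB' by blast
qed

lemma window_end_le:
  fixes t M D :: nat
  assumes "t < M"
  shows "2 * t * D + D \<le> 2 * M * D"
proof -
  have "2 * t * D + D \<le> 2 * Suc t * D" by simp
  also have "\<dots> \<le> 2 * M * D" using assms by (intro mult_le_mono) auto
  finally show ?thesis .
qed

text \<open>The \<open>t\<close>-th window runs from position \<open>1 + 2tD\<close> to \<open>1 + 2tD + D\<close> of the old chain;
  consecutive windows are \<open>D\<close> apart, so every new bag is covered by \<open>3D\<close> consecutive old bags.\<close>

lemma sep_chain_of_window_separations: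
  assumes g: "graph V E" and c: "sep_chain V E m L R" and p: "strict_chain m L R"
    and D: "1 \<le> D" and len: "1 + 2 * M * D \<le> m"
    and AB: "\<And>t. t < M \<Longrightarrow> sep_between V E L R (1 + 2 * t * D) (1 + 2 * t * D + D) (A t) (B t)"
  shows "sep_chain V E M (\<lambda>j. if j = 0 then {} else if j \<le> M then A (j - 1) else V)
      (\<lambda>j. if j = 0 then V else if j \<le> M then B (j - 1) else {})
    \<and> strict_chain M (\<lambda>j. if j = 0 then {} else if j \<le> M then A (j - 1) else V)
      (\<lambda>j. if j = 0 then V else if j \<le> M then B (j - 1) else {})"
proof (rule sep_chain_coarsen[OF c p])
  define st where "st t = 1 + 2 * t * D" for t
  have st_le: "st t + D \<le> m" if "t < M" for t using window_end_le[OF that, of D] len unfolding st_def by linarith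
  define lo where "lo j = (if j = 0 then 0 else if j \<le> M then st (j - 1) else Suc m)" for j
  define hi where "hi j = (if j = 0 then 0 else if j \<le> M then st (j - 1) + D else Suc m)" for j
  have L0: "L 0 = {}" "R 0 = V" "L (Suc m) = V" "R (Suc m) = {}" using c unfolding sep_chain_def by auto
  have trivial_seps: "separation V E {} V" "separation V E V {}"
    using g unfolding separation_def graph_def by auto
  show "lo j \<le> hi j \<and> hi j \<le> Suc m \<and> sep_between V E L R (lo j) (hi j)
      (if j = 0 then {} else if j \<le> M then A (j - 1) else V) (if j = 0 then V else if j \<le> M then B (j - 1) else {})"
    if j: "j \<le> Suc M" for j
  proof (cases "0 < j \<and> j \<le> M")
    case True
    then have "j - 1 < M" by auto
    from AB[OF this] st_le[OF this] show ?thesis using True unfolding lo_def hi_def st_def by simp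
  next
    case False
    then show ?thesis using L0 trivial_seps j unfolding lo_def hi_def sep_between_def by auto
  qed
  show "hi j < lo (Suc j)" if j: "j \<le> M" for j
  proof (cases "j = 0")
    case False
    then have j1: "j - 1 < M" using j by simp
    have "st j = st (j - 1) + 2 * D" using False unfolding st_def by (cases j) auto
    then show ?thesis using st_le[OF j1] D False j unfolding hi_def lo_def by auto
  qed (simp add: hi_def lo_def st_def)
  show "lo 0 = 0" "hi 0 = 0" "lo (Suc M) = Suc m" "hi (Suc M) = Suc m" by (simp_all add: lo_def hi_def)
qed

lemma lower_adhesion_coarsening:
  assumes g: "graph V E" and c: "sep_chain V E m L R" and p: "strict_chain m L R"
    and D: "1 \<le> D" and len: "1 + 2 * M * D \<le> m"
    and bags: "\<And>k. 0 < k \<Longrightarrow> k < m \<Longrightarrow> card (L (Suc k) \<inter> R k) \<le> w + 1"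
    and seps: "\<And>t. t < M \<Longrightarrow> \<exists>A B. sep_between V E L R (1 + 2 * t * D) (1 + 2 * t * D + D) A B
      \<and> card (A \<inter> B) < a"
  shows "\<exists>B'. path_decomp V E B' \<and> proper_pd B' \<and> interior_width_le B' (3 * D * (w + 1))
    \<and> adhesion_le B' (a - 1) \<and> length B' = M + 1"
proof -
  define st where "st t = 1 + 2 * t * D" for t
  have st_le: "st t + D \<le> m" if "t < M" for t using window_end_le[OF that, of D] len unfolding st_def by linarith
  obtain A B where AB: "\<And>t. t < M \<Longrightarrow> sep_between V E L R (st t) (st t + D) (A t) (B t) \<and> card (A t \<inter> B t) < a"
    using seps unfolding st_def by metis
  define A' where "A' j = (if j = 0 then {} else if j \<le> M then A (j - 1) else V)" for j
  define B' where "B' j = (if j = 0 then V else if j \<le> M then B (j - 1) else {})" for j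
  have chain': "sep_chain V E M A' B' \<and> strict_chain M A' B'"
    unfolding A'_def B'_def using sep_chain_of_window_separations[OF g c p D len] AB unfolding st_def by blast
  define C where "C = chain_bags M A' B'"
  have lenC: "length C = M + 1" unfolding C_def by simp
  have "adhesion_le C (a - 1)" unfolding adhesion_le_def
  proof (intro allI impI)
    fix i assume i: "i + 1 < length C"
    have "C ! i \<inter> C ! (i + 1) = Lset C (i + 1)" unfolding Lset_def by simp
    also have "\<dots> = A i \<inter> B i"
      unfolding C_def using Lset_chain_bags[OF chain'[THEN conjunct1], of "i + 1"] i lenC
      by (simp add: A'_def B'_def)
    finally show "card (C ! i \<inter> C ! (i + 1)) \<le> a - 1" using AB[of i] i lenC by auto
  qed
  moreover have "interior_width_le C (3 * D * (w + 1))" unfolding interior_width_le_def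
  proof (intro allI impI)
    fix i assume i: "0 < i \<and> i + 1 < length C"
    then have iM: "i - 1 < M" "i < M" using lenC by auto
    have "C ! i = A i \<inter> B (i - 1)" unfolding C_def using i lenC by (simp add: A'_def B'_def)
    also have "\<dots> \<subseteq> L (st i + D) \<inter> R (st (i - 1))"
      using AB[OF iM(1)] AB[OF iM(2)] unfolding sep_between_def by auto
    finally have sub: "C ! i \<subseteq> L (st i + D) \<inter> R (st (i - 1))" .
    have st_i: "st i = st (i - 1) + 2 * D" using i unfolding st_def by (cases i) auto
    have "card (L (st i + D) \<inter> R (st (i - 1))) \<le> (st i + D - st (i - 1)) * (w + 1)"
    proof (rule card_sep_chain_window_le[OF g c])
      show "st (i - 1) < st i + D" "st i + D \<le> Suc m" using st_le[OF iM(2)] st_i D by auto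
      fix k assume "st (i - 1) \<le> k" "k < st i + D"
      moreover have "0 < st (i - 1)" unfolding st_def by simp
      ultimately show "card (L (Suc k) \<inter> R k) \<le> w + 1" using st_le[OF iM(2)] by (intro bags) auto
    qed
    moreover have "finite (L (st i + D) \<inter> R (st (i - 1)))"
      using g sep_chainD(3)[OF c, of "st i + D"] st_le[OF iM(2)] unfolding graph_def
      by (meson finite_Int finite_subset le_SucI)
    ultimately show "card (C ! i) \<le> 3 * D * (w + 1) + 1"
      using card_mono[OF _ sub] st_i by (simp add: algebra_simps)
  qed
  moreover have "path_decomp V E C" "proper_pd C"
    unfolding C_def using path_decomp_chain_bags[OF g] proper_pd_chain_bags chain' by blast+
  ultimately show ?thesis using lenC by blast
qed

lemma linked_or_lower_adhesion:
  assumes g: "graph V E" and pd: "path_decomp V E B" and pr: "proper_pd B"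
    and iw: "interior_width_le B w" and ad: "adhesion_le B a"
    and D: "1 \<le> D" and M: "1 \<le> M" and len: "2 + 2 * M * D \<le> length B"
  shows "(\<exists>B'. path_decomp V E B' \<and> proper_pd B' \<and> p_linked V E B' a \<and> interior_width_le B' w
            \<and> length B' = D + 2)
       \<or> (0 < a \<and> (\<exists>B'. path_decomp V E B' \<and> proper_pd B' \<and> interior_width_le B' (3 * D * (w + 1))
            \<and> adhesion_le B' (a - 1) \<and> length B' = M + 1))"
proof -
  define m where "m = length B - 1"
  have m: "Suc m = length B" "1 + 2 * M * D \<le> m" using len unfolding m_def by auto
  have c: "sep_chain V E m (pd_left B) (pd_right B)" unfolding m_def by (rule sep_chain_pd_parts[OF pd])
  have p: "strict_chain m (pd_left B) (pd_right B)"
    unfolding m_def by (rule strict_chain_pd_parts[OF pd pr]) (use len in simp)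
  have adh: "card (pd_left B k \<inter> pd_right B k) \<le> a" if "0 < k" "k \<le> m" for k
  proof -
    have "k - 1 + 1 < length B" "k - 1 + 1 = k" using that m(1) by auto
    then show ?thesis using adhesion_eq_pd_parts[OF pd, of k] ad that unfolding adhesion_le_def by metis
  qed
  have bags: "card (pd_left B (Suc k) \<inter> pd_right B k) \<le> w + 1" if "0 < k" "k < m" for k
    using bag_eq_pd_parts[OF pd, of k] iw that m(1) unfolding interior_width_le_def by simp
  show ?thesis
  proof (cases "\<forall>t<M. \<exists>A' B'. sep_between V E (pd_left B) (pd_right B) (1 + 2 * t * D) (1 + 2 * t * D + D) A' B'
                  \<and> card (A' \<inter> B') < a")
    case True
    then have "0 < a" using M by fastforce
    then show ?thesis using lower_adhesion_coarsening[OF g c p D m(2) bags] True by blast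
  next
    case False
    then obtain t where t: "t < M" and tight: "\<And>A' B'. sep_between V E (pd_left B) (pd_right B)
        (1 + 2 * t * D) (1 + 2 * t * D + D) A' B' \<Longrightarrow> a \<le> card (A' \<inter> B')"
      using not_less by blast
    have e: "1 + 2 * t * D + D \<le> m" using window_end_le[OF t, of D] m(2) by linarith
    have "\<exists>B'. path_decomp V E B' \<and> proper_pd B' \<and> p_linked V E B' a \<and> interior_width_le B' w
        \<and> length B' = (1 + 2 * t * D + D) - (1 + 2 * t * D) + 2"
    proof (rule p_linked_window[OF g c p _ _ e _ _ tight])
      fix k assume "1 + 2 * t * D \<le> k" "k < 1 + 2 * t * D + D"
      then show "card (pd_left B (Suc k) \<inter> pd_right B k) \<le> w + 1" using e by (intro bags) auto
    next
      fix k assume "1 + 2 * t * D \<le> k" "k \<le> 1 + 2 * t * D + D"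
      then show "card (pd_left B k \<inter> pd_right B k) \<le> a" using e by (intro adh) auto
    qed simp_all
    then show ?thesis by simp
  qed
qed

definition forces_linked :: "nat \<Rightarrow> (nat \<Rightarrow> nat) \<Rightarrow> nat \<Rightarrow> nat \<Rightarrow> nat \<Rightarrow> bool" where
  "forces_linked a f w w0 n0 \<longleftrightarrow> (\<forall>V E B.
    graph V E \<and> path_decomp V E B \<and> proper_pd B \<and> interior_width_le B w
      \<and> adhesion_le B a \<and> n0 \<le> length B \<longrightarrow>
    (\<exists>w' p B'. w' \<le> w0 \<and> p \<le> a \<and> path_decomp V E B' \<and> proper_pd B'
       \<and> p_linked V E B' p \<and> interior_width_le B' w' \<and> f w' \<le> length B'))"

lemma forces_linked_step:
  assumes IH: "0 < a \<Longrightarrow> forces_linked (a - 1) f (3 * Suc (f w) * (w + 1)) w0 n0"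
  shows "forces_linked a f w (max w w0) (2 + 2 * Suc n0 * Suc (f w))"
  unfolding forces_linked_def
proof (intro allI impI)
  fix V E B
  assume h: "graph V E \<and> path_decomp V E B \<and> proper_pd B \<and> interior_width_le B w
    \<and> adhesion_le B a \<and> 2 + 2 * Suc n0 * Suc (f w) \<le> length B"
  have "(\<exists>B'. path_decomp V E B' \<and> proper_pd B' \<and> p_linked V E B' a \<and> interior_width_le B' w
            \<and> length B' = Suc (f w) + 2)
       \<or> (0 < a \<and> (\<exists>B'. path_decomp V E B' \<and> proper_pd B' \<and> interior_width_le B' (3 * Suc (f w) * (w + 1))
            \<and> adhesion_le B' (a - 1) \<and> length B' = Suc n0 + 1))"
    using h by (intro linked_or_lower_adhesion) auto
  then show "\<exists>w' p B'. w' \<le> max w w0 \<and> p \<le> a \<and> path_decomp V E B' \<and> proper_pd B'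
      \<and> p_linked V E B' p \<and> interior_width_le B' w' \<and> f w' \<le> length B'"
  proof
    assume "\<exists>B'. path_decomp V E B' \<and> proper_pd B' \<and> p_linked V E B' a \<and> interior_width_le B' w
      \<and> length B' = Suc (f w) + 2"
    then obtain B' where "path_decomp V E B'" "proper_pd B'" "p_linked V E B' a" "interior_width_le B' w"
      "f w \<le> length B'" by auto
    then show ?thesis by (intro exI[of _ w] exI[of _ a] exI[of _ B']) simp
  next
    assume "0 < a \<and> (\<exists>B'. path_decomp V E B' \<and> proper_pd B' \<and> interior_width_le B' (3 * Suc (f w) * (w + 1))
      \<and> adhesion_le B' (a - 1) \<and> length B' = Suc n0 + 1)"
    then obtain B' where "0 < a" "graph V E" "path_decomp V E B'" "proper_pd B'"
      "interior_width_le B' (3 * Suc (f w) * (w + 1))" "adhesion_le B' (a - 1)" "n0 \<le> length B'"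
      using h by auto
    then obtain w' p B'' where "w' \<le> w0" "p \<le> a - 1" "path_decomp V E B''" "proper_pd B''"
        "p_linked V E B'' p" "interior_width_le B'' w'" "f w' \<le> length B''"
      using IH unfolding forces_linked_def by blast
    then show ?thesis by (intro exI[of _ w'] exI[of _ p] exI[of _ B'']) auto
  qed
qed

lemma forces_linked_exists: "\<exists>w0 n0. forces_linked a f w w0 n0"
proof (induction a arbitrary: w)
  case 0
  show ?case using forces_linked_step[of 0] by blast
next
  case (Suc a)
  then obtain w0 n0 where "forces_linked a f (3 * Suc (f w) * (w + 1)) w0 n0" by blast
  then show ?case using forces_linked_step[of "Suc a" f w w0 n0] by auto
qed

theorem lemma3p6:
  fixes a w :: nat and f :: "nat \<Rightarrow> nat"
  assumes "mono f"
  shows "\<exists>w0 n0 :: nat. \<forall>V E B.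
    graph V E \<and> path_decomp V E B \<and> proper_pd B \<and> interior_width_le B w
      \<and> adhesion_le B a \<and> n0 \<le> length B \<longrightarrow>
    (\<exists>w' p B'. w' \<le> w0 \<and> p \<le> a \<and> path_decomp V E B' \<and> proper_pd B'
       \<and> p_linked V E B' p \<and> interior_width_le B' w' \<and> f w' \<le> length B')"
  using forces_linked_exists[of a f w] unfolding forces_linked_def .

end
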